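(* Let $f(1),f(2),f(3)$ be positive real numbers with $f(1)+f(2)+f(3)=1$. Then there exist a $1$-balanced sequence $\mathbf{u}$ over $\{a,b\}$, a $1$-balanced sequence $\mathbf{b}$ over $\{2,3\}$ and the constant sequence $\mathbf{a}=1^\omega$ such that the ternary sequence $\mathbf{v}=\mathrm{colour}(\mathbf{u},\mathbf{a},\mathbf{b})$ satisfies: (1) for each $i\in\{1,2,3\}$ the frequency of the letter $i$ in $\mathbf{v}$ exists and equals $f(i)$; (2) $\mathbf{v}$ is $2$-balanced.
   Context: A sequence $\mathbf{u}$ over an alphabet $\mathcal A$ is $C$-balanced ($C\ge 1$ an integer) if for any two factors $u,v$ of $\mathbf{u}$ with $|u|=|v|$ and every letter $x\in\mathcal A$ we have $\bigl||u|_x-|v|_x\bigr|\le C$, where $|w|_x$ is the number of occurrences of $x$ in $w$. The frequency of a letter $x$ in $\mathbf{u}=u_0u_1\cdots$ is $\lim_{n\to\infty}|u_0\cdots u_{n-1}|_x/n$, if the limit exists. Colouring: given a sequence $\mathbf{u}$ over $\{a,b\}$ and sequences $\mathbf{a},\mathbf{b}$ over disjoint alphabets $\mathcal A,\mathcal B$, $\mathrm{colour}(\mathbf{u},\mathbf{a},\mathbf{b})$ is the sequence over $\mathcal A\cup\mathcal B$ obtained from $\mathbf{u}$ by replacing the subsequence of all occurrences of $a$ (in order) by the sequence $\mathbf{a}$ and the subsequence of all occurrences of $b$ (in order) by the sequence $\mathbf{b}$. *)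

theory Defs
  imports Complex_Main
begin

datatype ab = LetA | LetB

definition occ :: "(nat \<Rightarrow> 'a) \<Rightarrow> 'a \<Rightarrow> nat \<Rightarrow> nat \<Rightarrow> nat" where
  "occ u x i n = card {k. i \<le> k \<and> k < i + n \<and> u k = x}"

definition balanced :: "nat \<Rightarrow> (nat \<Rightarrow> 'a) \<Rightarrow> bool" where
  "balanced C u \<longleftrightarrow> (\<forall>x i j n. \<bar>int (occ u x i n) - int (occ u x j n)\<bar> \<le> int C)"

definition has_freq :: "(nat \<Rightarrow> 'a) \<Rightarrow> 'a \<Rightarrow> real \<Rightarrow> bool" where
  "has_freq u x r \<longleftrightarrow> ((\<lambda>n. real (occ u x 0 n) / real n) \<longlonglongrightarrow> r)"

text \<open>colour(u, a, b): the k-th occurrence of LetA (counting from 0) is replaced by a k,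
  the k-th occurrence of LetB by b k.\<close>
definition colour :: "(nat \<Rightarrow> ab) \<Rightarrow> (nat \<Rightarrow> 'c) \<Rightarrow> (nat \<Rightarrow> 'c) \<Rightarrow> nat \<Rightarrow> 'c" where
  "colour u a b n = (if u n = LetA then a (occ u LetA 0 n) else b (occ u LetB 0 n))"

end

theory Submission
  imports Defs
begin

text \<open>Take \<open>u\<close> mechanical of slope \<open>f 1\<close> (its \<open>a\<close>'s become the 1s) and \<open>b\<close> mechanical of slope
  \<open>f 3 / (f 2 + f 3)\<close> (filling the remaining positions with 2s and 3s). Prefix counts of a mechanical
  word are floors of linear functions, so their second differences exceed those of the prefix
  lengths by less than 2. Substituting the prefix counts of \<open>u\<close>, whose second differences are at
  most 1 because \<open>u\<close> is balanced, bounds the second differences of the prefix counts of \<open>v\<close>, i.e.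
  its imbalance, by 2. Likewise the prefix counts stay within bounded distance of \<open>n f i\<close> under
  the substitution, which gives the frequencies.\<close>

lemma occ_0 [simp]: "occ u x i 0 = 0"
  unfolding occ_def by simp

lemma occ_Suc: "occ u x i (Suc n) = occ u x i n + (if u (i + n) = x then 1 else 0)"
proof -
  let ?S = "{k. i \<le> k \<and> k < i + n \<and> u k = x}"
  have "{k. i \<le> k \<and> k < i + Suc n \<and> u k = x} = (if u (i + n) = x then insert (i + n) ?S else ?S)"
    by (auto simp: less_Suc_eq)
  then show ?thesis
    unfolding occ_def by simp
qed

lemma occ_add: "occ u x 0 (i + n) = occ u x 0 i + occ u x i n"
  by (induction n) (simp_all add: occ_Suc)

lemma occ_notin_range: "x \<notin> range u \<Longrightarrow> occ u x i n = 0"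
  unfolding occ_def by auto

lemma occ_const: "occ (\<lambda>_. c) x 0 m = (if x = c then m else 0)"
  by (induction m) (simp_all add: occ_Suc)

lemma occ_LetA_plus_occ_LetB: "occ u LetA 0 n + occ u LetB 0 n = n"
proof (induction n)
  case (Suc n)
  then show ?case
    by (cases "u n") (simp_all add: occ_Suc)
qed simp

lemma occ_colour:
  "occ (colour u a b) y 0 n = occ a y 0 (occ u LetA 0 n) + occ b y 0 (occ u LetB 0 n)"
proof (induction n)
  case (Suc n)
  then show ?case
    by (cases "u n") (simp_all add: occ_Suc colour_def)
qed simp

lemma balanced_iff_prefix_counts:
  "balanced C s \<longleftrightarrow> (\<forall>x i j n.
     \<bar>(int (occ s x 0 (i + n)) - int (occ s x 0 i)) - (int (occ s x 0 (j + n)) - int (occ s x 0 j))\<bar> \<le> int C)"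
  unfolding balanced_def by (simp add: occ_add)

lemma floor_second_diff:
  fixes a b c d :: real
  shows "\<bar>real_of_int ((\<lfloor>a\<rfloor> - \<lfloor>b\<rfloor>) - (\<lfloor>c\<rfloor> - \<lfloor>d\<rfloor>)) - ((a - b) - (c - d))\<bar> < 2"
  using floor_correct[of a] floor_correct[of b] floor_correct[of c] floor_correct[of d]
  by linarith

definition mechanical :: "real \<Rightarrow> 'a \<Rightarrow> 'a \<Rightarrow> nat \<Rightarrow> 'a" where
  "mechanical g p q n = (if \<lfloor>real (Suc n) * g\<rfloor> = \<lfloor>real n * g\<rfloor> + 1 then p else q)"

lemma range_mechanical: "range (mechanical g p q) \<subseteq> {p, q}"
  unfolding mechanical_def by auto

lemma floor_mult_Suc:
  fixes g :: real
  assumes "0 \<le> g" "g \<le> 1"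
  shows "\<lfloor>real (Suc n) * g\<rfloor> = \<lfloor>real n * g\<rfloor> \<or> \<lfloor>real (Suc n) * g\<rfloor> = \<lfloor>real n * g\<rfloor> + 1"
proof -
  have "real (Suc n) * g = real n * g + g"
    by (simp add: algebra_simps)
  then show ?thesis
    using assms floor_correct[of "real n * g"] floor_correct[of "real (Suc n) * g"] by linarith
qed

lemma occ_mechanical:
  assumes "0 \<le> g" "g \<le> 1" "p \<noteq> q"
  shows "int (occ (mechanical g p q) x 0 m) =
    (if x = p then \<lfloor>real m * g\<rfloor> else if x = q then int m - \<lfloor>real m * g\<rfloor> else 0)"
proof (induction m)
  case (Suc m)
  then show ?case
    using floor_mult_Suc[OF assms(1,2), of m] assms(3)
    by (auto simp: occ_Suc mechanical_def)
qed simp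

text \<open>Equal length differences give 1-balance; the slack for unequal ones is what makes the property
  survive composition with the counting function of a balanced word.\<close>
definition strongly_balanced :: "(nat \<Rightarrow> 'a) \<Rightarrow> bool" where
  "strongly_balanced s \<longleftrightarrow> (\<forall>x m1 m2 m3 m4.
     \<bar>(int (occ s x 0 m1) - int (occ s x 0 m2)) - (int (occ s x 0 m3) - int (occ s x 0 m4))\<bar>
       \<le> \<bar>(int m1 - int m2) - (int m3 - int m4)\<bar> + 1)"

lemma strongly_balanced_imp_balanced:
  assumes "strongly_balanced s"
  shows "balanced 1 s"
  unfolding balanced_iff_prefix_counts
proof (intro allI)
  fix x i j n
  show "\<bar>(int (occ s x 0 (i + n)) - int (occ s x 0 i)) - (int (occ s x 0 (j + n)) - int (occ s x 0 j))\<bar> \<le> int 1"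
    using assms[unfolded strongly_balanced_def, rule_format, of x "i + n" i "j + n" j] by simp
qed

lemma strongly_balanced_const: "strongly_balanced (\<lambda>_. c)"
  unfolding strongly_balanced_def occ_const by simp

lemma strongly_balanced_mechanical:
  assumes "0 \<le> g" "g \<le> 1" "p \<noteq> q"
  shows "strongly_balanced (mechanical g p q)"
  unfolding strongly_balanced_def
proof (intro allI)
  fix x m1 m2 m3 m4
  define D where "D = (int m1 - int m2) - (int m3 - int m4)"
  define P where "P = (\<lfloor>real m1 * g\<rfloor> - \<lfloor>real m2 * g\<rfloor>) - (\<lfloor>real m3 * g\<rfloor> - \<lfloor>real m4 * g\<rfloor>)"
  have "(real m1 * g - real m2 * g) - (real m3 * g - real m4 * g) = real_of_int D * g"
    unfolding D_def by (simp add: algebra_simps)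
  then have P_near: "\<bar>real_of_int P - real_of_int D * g\<bar> < 2"
    unfolding P_def using floor_second_diff by metis
  have "\<bar>real_of_int D * g\<bar> \<le> \<bar>real_of_int D\<bar>" "\<bar>real_of_int D * (1 - g)\<bar> \<le> \<bar>real_of_int D\<bar>"
    using assms(1,2) by (simp_all add: abs_mult mult_left_le)
  moreover have "\<bar>real_of_int (D - P) - real_of_int D * (1 - g)\<bar> < 2"
  proof -
    have "real_of_int (D - P) - real_of_int D * (1 - g) = - (real_of_int P - real_of_int D * g)"
      by (simp add: algebra_simps)
    then show ?thesis
      using P_near by (simp only: abs_minus_cancel)
  qed
  ultimately have "\<bar>real_of_int P\<bar> < \<bar>real_of_int D\<bar> + 2" "\<bar>real_of_int (D - P)\<bar> < \<bar>real_of_int D\<bar> + 2"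
    using P_near abs_triangle_ineq2[of "real_of_int P" "real_of_int D * g"]
      abs_triangle_ineq2[of "real_of_int (D - P)" "real_of_int D * (1 - g)"] by linarith+
  then have "\<bar>P\<bar> \<le> \<bar>D\<bar> + 1" "\<bar>D - P\<bar> \<le> \<bar>D\<bar> + 1"
    unfolding of_int_abs[symmetric] by linarith+
  then show "\<bar>(int (occ (mechanical g p q) x 0 m1) - int (occ (mechanical g p q) x 0 m2)) -
      (int (occ (mechanical g p q) x 0 m3) - int (occ (mechanical g p q) x 0 m4))\<bar>
      \<le> \<bar>(int m1 - int m2) - (int m3 - int m4)\<bar> + 1"
    unfolding occ_mechanical[OF assms] D_def P_def by (auto simp: algebra_simps)
qed

lemma strongly_balanced_comp_balanced:
  assumes "strongly_balanced w" "balanced 1 u"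
  shows "\<bar>(int (occ w y 0 (occ u z 0 (i + n))) - int (occ w y 0 (occ u z 0 i))) -
           (int (occ w y 0 (occ u z 0 (j + n))) - int (occ w y 0 (occ u z 0 j)))\<bar> \<le> 2"
proof -
  have "\<bar>(int (occ u z 0 (i + n)) - int (occ u z 0 i)) - (int (occ u z 0 (j + n)) - int (occ u z 0 j))\<bar> \<le> 1"
    using assms(2) unfolding balanced_iff_prefix_counts by simp
  moreover note assms(1)[unfolded strongly_balanced_def, rule_format,
      of y "occ u z 0 (i + n)" "occ u z 0 i" "occ u z 0 (j + n)" "occ u z 0 j"]
  ultimately show ?thesis
    by linarith
qed

lemma balanced_colour:
  assumes "balanced 1 u" "strongly_balanced a" "strongly_balanced b" "range a \<inter> range b = {}"
  shows "balanced 2 (colour u a b)"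
  unfolding balanced_iff_prefix_counts
proof (intro allI)
  fix y i j n
  consider "y \<notin> range b" | "y \<notin> range a"
    using assms(4) by blast
  then show "\<bar>(int (occ (colour u a b) y 0 (i + n)) - int (occ (colour u a b) y 0 i)) -
      (int (occ (colour u a b) y 0 (j + n)) - int (occ (colour u a b) y 0 j))\<bar> \<le> int 2"
  proof cases
    case 1
    then show ?thesis
      using strongly_balanced_comp_balanced[OF assms(2,1)]
      by (simp add: occ_colour occ_notin_range)
  next
    case 2
    then show ?thesis
      using strongly_balanced_comp_balanced[OF assms(3,1)]
      by (simp add: occ_colour occ_notin_range)
  qed
qed

definition bounded_discrepancy :: "(nat \<Rightarrow> 'a) \<Rightarrow> 'a \<Rightarrow> real \<Rightarrow> bool" where
  "bounded_discrepancy s x r \<longleftrightarrow> (\<exists>K. \<forall>n. \<bar>real (occ s x 0 n) - real n * r\<bar> \<le> K)"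

lemma bounded_discrepancy_imp_has_freq:
  assumes "bounded_discrepancy s x r"
  shows "has_freq s x r"
proof -
  obtain K where K: "\<And>n. \<bar>real (occ s x 0 n) - real n * r\<bar> \<le> K"
    using assms unfolding bounded_discrepancy_def by blast
  have "(\<lambda>n. real (occ s x 0 n) / real n - r) \<longlonglongrightarrow> 0"
  proof (rule tendsto_0_le[where f = "\<lambda>n. 1 / real n" and K = K])
    show "(\<lambda>n. 1 / real n) \<longlonglongrightarrow> 0"
      by (rule lim_const_over_n)
    have "norm (real (occ s x 0 n) / real n - r) \<le> norm (1 / real n) * K" if "n \<ge> 1" for n
    proof -
      have "real (occ s x 0 n) / real n - r = (real (occ s x 0 n) - real n * r) / real n"
        using that by (simp add: field_simps)
      then show ?thesis
        using K[of n] that by (simp add: divide_right_mono)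
    qed
    then show "\<forall>\<^sub>F n in sequentially. norm (real (occ s x 0 n) / real n - r) \<le> norm (1 / real n) * K"
      unfolding eventually_sequentially by blast
  qed
  then show ?thesis
    unfolding has_freq_def by (rule LIM_zero_cancel)
qed

lemma bounded_discrepancy_notin_range: "x \<notin> range s \<Longrightarrow> bounded_discrepancy s x 0"
  unfolding bounded_discrepancy_def by (auto simp: occ_notin_range)

lemma bounded_discrepancy_const: "bounded_discrepancy (\<lambda>_. c) c 1"
  unfolding bounded_discrepancy_def by (auto simp: occ_const)

lemma bounded_discrepancy_mechanical:
  assumes "0 \<le> g" "g \<le> 1" "p \<noteq> q"
  shows "bounded_discrepancy (mechanical g p q) p g"
    and "bounded_discrepancy (mechanical g p q) q (1 - g)"
proof -
  have "\<bar>real_of_int \<lfloor>real n * g\<rfloor> - real n * g\<bar> \<le> 1" for n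
    using floor_correct[of "real n * g"] by linarith
  moreover have "real (occ (mechanical g p q) x 0 n) = real_of_int (int (occ (mechanical g p q) x 0 n))" for x n
    by simp
  ultimately show "bounded_discrepancy (mechanical g p q) p g"
    and "bounded_discrepancy (mechanical g p q) q (1 - g)"
    unfolding bounded_discrepancy_def occ_mechanical[OF assms] using assms(3)
    by (auto simp: algebra_simps abs_minus_commute intro!: exI[of _ 1])
qed

lemma bounded_discrepancy_colour:
  assumes "bounded_discrepancy u LetA \<alpha>" "bounded_discrepancy a y r" "bounded_discrepancy b y r'"
  shows "bounded_discrepancy (colour u a b) y (\<alpha> * r + (1 - \<alpha>) * r')"
proof -
  obtain Ku Ka Kb where
    Ku: "\<And>n. \<bar>real (occ u LetA 0 n) - real n * \<alpha>\<bar> \<le> Ku" and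
    Ka: "\<And>m. \<bar>real (occ a y 0 m) - real m * r\<bar> \<le> Ka" and
    Kb: "\<And>m. \<bar>real (occ b y 0 m) - real m * r'\<bar> \<le> Kb"
    using assms unfolding bounded_discrepancy_def by metis
  have "\<bar>real (occ (colour u a b) y 0 n) - real n * (\<alpha> * r + (1 - \<alpha>) * r')\<bar>
          \<le> Ka + Kb + (\<bar>r\<bar> + \<bar>r'\<bar>) * Ku" for n
  proof -
    define A where "A = occ u LetA 0 n"
    define B where "B = occ u LetB 0 n"
    define e where "e = real A - real n * \<alpha>"
    have B: "real B = real n - real A"
      using occ_LetA_plus_occ_LetB[of u n] unfolding A_def B_def by linarith
    have "real (occ (colour u a b) y 0 n) - real n * (\<alpha> * r + (1 - \<alpha>) * r')
        = (real (occ a y 0 A) - real A * r) + (real (occ b y 0 B) - real B * r') + (r - r') * e"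
      unfolding occ_colour A_def[symmetric] B_def[symmetric] e_def B
      by (simp add: algebra_simps)
    moreover have "\<bar>(r - r') * e\<bar> \<le> (\<bar>r\<bar> + \<bar>r'\<bar>) * Ku"
      unfolding abs_mult using Ku[of n] abs_triangle_ineq4[of r r']
      by (intro mult_mono) (simp_all add: e_def A_def)
    ultimately show ?thesis
      using Ka[of A] Kb[of B] by linarith
  qed
  then show ?thesis
    unfolding bounded_discrepancy_def by blast
qed

lemma has_freq_colour_mechanical:
  fixes \<alpha> \<beta> :: real
  assumes \<alpha>: "0 \<le> \<alpha>" "\<alpha> \<le> 1" and \<beta>: "0 \<le> \<beta>" "\<beta> \<le> 1"
  defines "v \<equiv> colour (mechanical \<alpha> LetA LetB) (\<lambda>_. 1) (mechanical \<beta> (3::nat) 2)"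
  shows "has_freq v 1 \<alpha>" and "has_freq v 2 ((1 - \<alpha>) * (1 - \<beta>))" and "has_freq v 3 ((1 - \<alpha>) * \<beta>)"
proof -
  note colour = bounded_discrepancy_colour[OF bounded_discrepancy_mechanical(1)[OF \<alpha> ab.distinct(1)]]
  have "(3::nat) \<noteq> 2"
    by simp
  note disc_b = bounded_discrepancy_mechanical[OF \<beta> this]
  have no_1: "1 \<notin> range (mechanical \<beta> (3::nat) 2)"
    using range_mechanical[of \<beta> "3::nat" 2] by auto
  have no_23: "2 \<notin> range (\<lambda>_. 1::nat)" "3 \<notin> range (\<lambda>_. 1::nat)"
    by auto
  show "has_freq v 1 \<alpha>"
    using colour[OF bounded_discrepancy_const bounded_discrepancy_notin_range[OF no_1]]
    unfolding v_def by (simp add: bounded_discrepancy_imp_has_freq)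
  show "has_freq v 2 ((1 - \<alpha>) * (1 - \<beta>))"
    using colour[OF bounded_discrepancy_notin_range[OF no_23(1)] disc_b(2)]
    unfolding v_def by (simp add: bounded_discrepancy_imp_has_freq)
  show "has_freq v 3 ((1 - \<alpha>) * \<beta>)"
    using colour[OF bounded_discrepancy_notin_range[OF no_23(2)] disc_b(1)]
    unfolding v_def by (simp add: bounded_discrepancy_imp_has_freq)
qed

theorem theorem1:
  fixes f :: "nat \<Rightarrow> real"
  assumes "f 1 > 0" and "f 2 > 0" and "f 3 > 0"
    and "f 1 + f 2 + f 3 = 1"
  shows "\<exists>(u :: nat \<Rightarrow> ab) (b :: nat \<Rightarrow> nat).
           balanced 1 u \<and> range b \<subseteq> {2, 3} \<and> balanced 1 b \<and>
           (\<forall>i\<in>{1, 2, 3}. has_freq (colour u (\<lambda>_. 1) b) i (f i)) \<and>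
           balanced 2 (colour u (\<lambda>_. 1) b)"
proof -
  define \<alpha> where "\<alpha> = f 1"
  define \<beta> where "\<beta> = f 3 / (f 2 + f 3)"
  have \<alpha>: "0 \<le> \<alpha>" "\<alpha> \<le> 1" and \<beta>: "0 \<le> \<beta>" "\<beta> \<le> 1"
    using assms unfolding \<alpha>_def \<beta>_def by (simp_all add: field_simps)
  have complement: "1 - \<alpha> = f 2 + f 3"
    using assms(4) unfolding \<alpha>_def by linarith
  have f: "f 1 = \<alpha>" "f 2 = (1 - \<alpha>) * (1 - \<beta>)" "f 3 = (1 - \<alpha>) * \<beta>"
    using assms(2,3) unfolding complement \<beta>_def by (simp_all add: \<alpha>_def field_simps)
  define u where "u = mechanical \<alpha> LetA LetB"
  define b where "b = mechanical \<beta> (3::nat) 2"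
  have sb_u: "strongly_balanced u" and sb_b: "strongly_balanced b"
    unfolding u_def b_def using \<alpha> \<beta> by (simp_all add: strongly_balanced_mechanical)
  have range_b: "range b \<subseteq> {2, 3}"
    unfolding b_def using range_mechanical[of \<beta> "3::nat" 2] by auto
  have bal_v: "balanced 2 (colour u (\<lambda>_. 1) b)"
    using range_b by (intro balanced_colour strongly_balanced_imp_balanced sb_u sb_b strongly_balanced_const) auto
  have freq: "\<forall>i\<in>{1, 2, 3}. has_freq (colour u (\<lambda>_. 1) b) i (f i)"
    using has_freq_colour_mechanical[OF \<alpha> \<beta>] unfolding u_def b_def by (simp add: f del: One_nat_def)
  show ?thesis
    by (intro exI[of _ u] exI[of _ b] conjI strongly_balanced_imp_balanced sb_u sb_b range_b freq bal_v)
qed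

end
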